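(* There exist an environment $E$ and a total preorder $\succeq$ on $\Pi^E$ such that $\succeq\in\mathrm{Ord}_{\mathrm{MR}}(E)\cap\mathrm{Ord}_{\mathrm{LAR}}(E)$ but $\succeq\notin\mathrm{Ord}_{\mathrm{LTL}}(E)$.
   Context: An environment is a tuple $E=(\mathcal S,\mathcal A,\mathcal T,\mathcal I)$ where $\mathcal S,\mathcal A$ are finite nonempty sets, $\mathcal T:\mathcal S\times\mathcal A\to\Delta(\mathcal S)$ and $\mathcal I\in\Delta(\mathcal S)$. A policy is a map $\pi:\mathcal S\to\Delta(\mathcal A)$ (stationary, possibly stochastic); $\Pi^E$ denotes the set of all policies. A trajectory $\xi=(s_0,a_0,s_1,a_1,\dots)\in\Xi:=\mathcal S\times(\mathcal A\times\mathcal S)^\omega$ is generated under $\pi$ by $s_0\sim\mathcal I$, $a_t\sim\pi(s_t)$, $s_{t+1}\sim\mathcal T(s_t,a_t)$; $\mathbb E^\pi_\xi$ denotes expectation under this distribution. An objective-specification formalism $X$ assigns to each environment $E$ a set of objective specifications, each inducing a total preorder $\succeq$ on $\Pi^E$; $\mathrm{Ord}_X(E)$ is the set of total preorders so induced. A specification defining a scalar $J:\Pi^E\to\mathbb R$ induces $\pi_1\succeq\pi_2\iff J(\pi_1)\ge J(\pi_2)$. MR: specification $(\mathcal R,\gamma)$, $\mathcal R:\mathcal S\times\mathcal A\times\mathcal S\to\mathbb R$, $\gamma\in[0,1)$, $J(\pi)=\mathbb E^\pi_\xi[\sum_{t=0}^\infty\gamma^t\mathcal R(s_t,a_t,s_{t+1})]$.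 LAR: specification $(\mathcal R)$, $\mathcal R:\mathcal S\times\mathcal A\times\mathcal S\to\mathbb R$, $J(\pi)=\lim_{N\to\infty}\frac1N\mathbb E^\pi_\xi[\sum_{t=0}^{N-1}\mathcal R(s_t,a_t,s_{t+1})]$. LTL: specification $(\varphi)$ with $\varphi$ a linear temporal logic formula whose atomic propositions are the transitions $(s,a,s')\in\mathcal S\times\mathcal A\times\mathcal S$, built with $\neg,\lor,\land,\to$ and the temporal operators $\bigcirc$ (next), $\square$ (always), $\lozenge$ (eventually), $\mathcal U$ (until). Semantics on a trajectory $\xi$ at time $t$: an atomic proposition $(s,a,s')$ holds iff $(s_t,a_t,s_{t+1})=(s,a,s')$; $\bigcirc\psi$ holds iff $\psi$ holds at $t+1$; $\square\psi$ iff $\psi$ holds at every $t'\ge t$; $\lozenge\psi$ iff $\psi$ holds at some $t'\ge t$; $\psi\,\mathcal U\,\chi$ iff there is $t'\ge t$ with $\chi$ holding at $t'$ and $\psi$ holding at every $t''$ with $t\le t''<t'$; Boolean connectives as usual. $\varphi(\xi)=1$ if $\varphi$ holds at time $0$ and $0$ otherwise; $J(\pi)=\mathbb E^\pi_\xi[\varphi(\xi)]$. *)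

theory Defs
  imports "HOL-Probability.Probability"
begin

(* States and actions are encoded as natural numbers; an environment carries
   explicit finite nonempty carrier sets S and A. *)
record env =
  St :: "nat set"
  Ac :: "nat set"
  Tr :: "nat \<Rightarrow> nat \<Rightarrow> nat pmf"
  In :: "nat pmf"

definition wf_env :: "env \<Rightarrow> bool" where
  "wf_env E \<longleftrightarrow> finite (St E) \<and> St E \<noteq> {} \<and> finite (Ac E) \<and> Ac E \<noteq> {} \<and>
     (\<forall>s\<in>St E. \<forall>a\<in>Ac E. set_pmf (Tr E s a) \<subseteq> St E) \<and> set_pmf (In E) \<subseteq> St E"

(* Stationary stochastic policies S -> Delta(A), extensional outside S *)
definition policies :: "env \<Rightarrow> (nat \<Rightarrow> nat pmf) set" where
  "policies E = {\<pi>. (\<forall>s\<in>St E. set_pmf (\<pi> s) \<subseteq> Ac E) \<and>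
                     (\<forall>s. s \<notin> St E \<longrightarrow> \<pi> s = return_pmf undefined)}"

(* A trajectory (s0,a0,s1,a1,...) is represented as the stream of pairs (s_t,a_t). *)
fun cont_prob :: "env \<Rightarrow> (nat \<Rightarrow> nat pmf) \<Rightarrow> nat \<Rightarrow> nat \<Rightarrow> (nat \<times> nat) list \<Rightarrow> real" where
  "cont_prob E \<pi> s a [] = 1"
| "cont_prob E \<pi> s a ((s', a') # xs) =
     pmf (Tr E s a) s' * pmf (\<pi> s') a' * cont_prob E \<pi> s' a' xs"

fun prefix_prob :: "env \<Rightarrow> (nat \<Rightarrow> nat pmf) \<Rightarrow> (nat \<times> nat) list \<Rightarrow> real" where
  "prefix_prob E \<pi> [] = 1"
| "prefix_prob E \<pi> ((s, a) # xs) = pmf (In E) s * pmf (\<pi> s) a * cont_prob E \<pi> s a xs"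

(* The trajectory distribution under \<pi>: the (unique) probability measure on
   trajectories whose finite-dimensional distributions are those of the process
   s0 ~ I, a_t ~ \<pi>(s_t), s_{t+1} ~ T(s_t,a_t). *)
definition traj :: "env \<Rightarrow> (nat \<Rightarrow> nat pmf) \<Rightarrow> (nat \<times> nat) stream measure" where
  "traj E \<pi> = (THE M. prob_space M \<and> sets M = sets (stream_space (count_space UNIV)) \<and>
      (\<forall>xs. emeasure M (sstart UNIV xs) = ennreal (prefix_prob E \<pi> xs)))"

definition trans_at :: "(nat \<times> nat) stream \<Rightarrow> nat \<Rightarrow> nat \<times> nat \<times> nat" where
  "trans_at \<omega> t = (fst (\<omega> !! t), snd (\<omega> !! t), fst (\<omega> !! Suc t))"

definition J_MR :: "env \<Rightarrow> (nat \<times> nat \<times> nat \<Rightarrow> real) \<Rightarrow> real \<Rightarrow> (nat \<Rightarrow> nat pmf) \<Rightarrow> real" where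
  "J_MR E R \<gamma> \<pi> = (\<integral>\<omega>. (\<Sum>t. \<gamma> ^ t * R (trans_at \<omega> t)) \<partial>traj E \<pi>)"

definition J_LAR :: "env \<Rightarrow> (nat \<times> nat \<times> nat \<Rightarrow> real) \<Rightarrow> (nat \<Rightarrow> nat pmf) \<Rightarrow> real" where
  "J_LAR E R \<pi> = lim (\<lambda>N. (1 / real N) * (\<integral>\<omega>. (\<Sum>t<N. R (trans_at \<omega> t)) \<partial>traj E \<pi>))"

datatype ltl =
    LAtom "nat \<times> nat \<times> nat"
  | LNot ltl
  | LOr ltl ltl
  | LAnd ltl ltl
  | LImp ltl ltl
  | LNext ltl
  | LAlways ltl
  | LEventually ltl
  | LUntil ltl ltl

primrec ltl_atoms :: "ltl \<Rightarrow> (nat \<times> nat \<times> nat) set" where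
  "ltl_atoms (LAtom p) = {p}"
| "ltl_atoms (LNot f) = ltl_atoms f"
| "ltl_atoms (LOr f g) = ltl_atoms f \<union> ltl_atoms g"
| "ltl_atoms (LAnd f g) = ltl_atoms f \<union> ltl_atoms g"
| "ltl_atoms (LImp f g) = ltl_atoms f \<union> ltl_atoms g"
| "ltl_atoms (LNext f) = ltl_atoms f"
| "ltl_atoms (LAlways f) = ltl_atoms f"
| "ltl_atoms (LEventually f) = ltl_atoms f"
| "ltl_atoms (LUntil f g) = ltl_atoms f \<union> ltl_atoms g"

primrec ltl_holds :: "ltl \<Rightarrow> (nat \<times> nat) stream \<Rightarrow> nat \<Rightarrow> bool" where
  "ltl_holds (LAtom p) \<omega> t = (trans_at \<omega> t = p)"
| "ltl_holds (LNot f) \<omega> t = (\<not> ltl_holds f \<omega> t)"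
| "ltl_holds (LOr f g) \<omega> t = (ltl_holds f \<omega> t \<or> ltl_holds g \<omega> t)"
| "ltl_holds (LAnd f g) \<omega> t = (ltl_holds f \<omega> t \<and> ltl_holds g \<omega> t)"
| "ltl_holds (LImp f g) \<omega> t = (ltl_holds f \<omega> t \<longrightarrow> ltl_holds g \<omega> t)"
| "ltl_holds (LNext f) \<omega> t = ltl_holds f \<omega> (Suc t)"
| "ltl_holds (LAlways f) \<omega> t = (\<forall>t'\<ge>t. ltl_holds f \<omega> t')"
| "ltl_holds (LEventually f) \<omega> t = (\<exists>t'\<ge>t. ltl_holds f \<omega> t')"
| "ltl_holds (LUntil f g) \<omega> t =
     (\<exists>t'\<ge>t. ltl_holds g \<omega> t' \<and> (\<forall>t''. t \<le> t'' \<and> t'' < t' \<longrightarrow> ltl_holds f \<omega> t''))"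

definition J_LTL :: "env \<Rightarrow> ltl \<Rightarrow> (nat \<Rightarrow> nat pmf) \<Rightarrow> real" where
  "J_LTL E \<phi> \<pi> = (\<integral>\<omega>. (if ltl_holds \<phi> \<omega> 0 then 1 else 0) \<partial>traj E \<pi>)"

(* preorder on policies induced by a scalar objective: (\<pi>1,\<pi>2) means \<pi>1 \<succeq> \<pi>2 *)
definition induced_ord :: "env \<Rightarrow> ((nat \<Rightarrow> nat pmf) \<Rightarrow> real) \<Rightarrow> ((nat \<Rightarrow> nat pmf) \<times> (nat \<Rightarrow> nat pmf)) set" where
  "induced_ord E J = {(\<pi>1, \<pi>2). \<pi>1 \<in> policies E \<and> \<pi>2 \<in> policies E \<and> J \<pi>1 \<ge> J \<pi>2}"

definition Ord_MR :: "env \<Rightarrow> ((nat \<Rightarrow> nat pmf) \<times> (nat \<Rightarrow> nat pmf)) set set" where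
  "Ord_MR E = {induced_ord E (J_MR E R \<gamma>) | R \<gamma>. 0 \<le> \<gamma> \<and> \<gamma> < 1}"

definition Ord_LAR :: "env \<Rightarrow> ((nat \<Rightarrow> nat pmf) \<times> (nat \<Rightarrow> nat pmf)) set set" where
  "Ord_LAR E = {induced_ord E (J_LAR E R) | R. True}"

definition Ord_LTL :: "env \<Rightarrow> ((nat \<Rightarrow> nat pmf) \<times> (nat \<Rightarrow> nat pmf)) set set" where
  "Ord_LTL E = {induced_ord E (J_LTL E \<phi>) | \<phi>. ltl_atoms \<phi> \<subseteq> St E \<times> Ac E \<times> St E}"

end

theory Submission
  imports Defs
begin

text \<open>Take one state and three actions \<open>0, 1, 2\<close>, rewarded by their index. Since the
state never changes, the pairs \<open>(s\<^sub>t, a\<^sub>t)\<close> are i.i.d., so both the myopic discounted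
objective and the limit-average objective equal the expected action, and the three
deterministic policies are ranked strictly \<open>0 \<prec> 1 \<prec> 2\<close>. A deterministic policy, however,
produces one trajectory almost surely, so every LTL formula is satisfied by it with
probability \<open>0\<close> or \<open>1\<close>: an LTL objective separates at most two of the three policies.\<close>

lemma (in prob_space) nn_integral_stream_space_snth:
  assumes [measurable]: "f \<in> borel_measurable M"
  shows "(\<integral>\<^sup>+\<omega>. f (\<omega> !! t) \<partial>stream_space M) = (\<integral>\<^sup>+x. f x \<partial>M)"
proof (induction t)
  case 0
  show ?case
    by (subst nn_integral_stream_space) (simp_all add: prob_space.emeasure_space_1[OF prob_space_stream_space])
next
  case (Suc t)
  show ?case
    by (subst nn_integral_stream_space) (simp_all add: Suc emeasure_space_1)
qed

lemma (in prob_space) distr_stream_space_snth: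
  "distr (stream_space M) M (\<lambda>\<omega>. \<omega> !! t) = M"
proof (rule measure_eqI)
  fix A assume "A \<in> sets (distr (stream_space M) M (\<lambda>\<omega>. \<omega> !! t))"
  then have [measurable]: "A \<in> sets M" by simp
  have "(\<lambda>\<omega>. \<omega> !! t) -` A \<inter> space (stream_space M) \<in> sets (stream_space M)"
    by measurable
  then have "emeasure (distr (stream_space M) M (\<lambda>\<omega>. \<omega> !! t)) A
      = (\<integral>\<^sup>+\<omega>. indicator ((\<lambda>\<omega>. \<omega> !! t) -` A \<inter> space (stream_space M)) \<omega> \<partial>stream_space M)"
    by (simp add: emeasure_distr)
  also have "\<dots> = (\<integral>\<^sup>+\<omega>. indicator A (\<omega> !! t) \<partial>stream_space M)"
    by (intro nn_integral_cong) (simp split: split_indicator)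
  also have "\<dots> = emeasure M A"
    by (simp add: nn_integral_stream_space_snth)
  finally show "emeasure (distr (stream_space M) M (\<lambda>\<omega>. \<omega> !! t)) A = emeasure M A" .
qed simp

lemma emeasure_stream_space_pmf_sstart:
  "emeasure (stream_space (measure_pmf p)) (sstart UNIV xs) = ennreal (prod_list (map (pmf p) xs))"
proof (induction xs)
  case Nil
  show ?case
    using prob_space.emeasure_space_1[OF prob_space.prob_space_stream_space[OF prob_space_measure_pmf]]
    by (simp add: space_stream_space)
next
  case (Cons x xs)
  have "sstart UNIV (x # xs) \<in> sets (stream_space (measure_pmf p))"
    using sets_stream_space_cong[of "measure_pmf p" "count_space UNIV"] sstart_sets by simp
  then have "emeasure (stream_space (measure_pmf p)) (sstart UNIV (x # xs)) =
      (\<integral>\<^sup>+y. emeasure (stream_space (measure_pmf p))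
          {\<omega> \<in> space (stream_space (measure_pmf p)). y ## \<omega> \<in> sstart UNIV (x # xs)} \<partial>measure_pmf p)"
    by (rule prob_space.emeasure_stream_space[OF prob_space_measure_pmf])
  also have "\<dots> = (\<integral>\<^sup>+y. emeasure (stream_space (measure_pmf p)) (sstart UNIV xs) * indicator {x} y \<partial>measure_pmf p)"
    by (intro nn_integral_cong) (auto simp: space_stream_space split: split_indicator)
  also have "\<dots> = emeasure (stream_space (measure_pmf p)) (sstart UNIV xs) * pmf p x"
    by (simp add: nn_integral_cmult_indicator emeasure_pmf_single)
  finally show ?case
    using Cons by (simp add: ennreal_mult' mult.commute)
qed

lemma AE_stream_space_return_pmf:
  "AE \<omega> in stream_space (return_pmf x). \<omega> = sconst x"
proof -
  have "AE \<omega> in stream_space (return_pmf x). stream_all (\<lambda>y. y = x) \<omega>"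
    by (rule prob_space.AE_stream_all[OF prob_space_measure_pmf]) (auto simp: AE_measure_pmf_iff)
  then show ?thesis
    by eventually_elim (auto simp: sconst_alt, metis shd_sset)
qed

lemma integral_stream_space_return_pmf:
  fixes f :: "'a stream \<Rightarrow> real"
  shows "(\<integral>\<omega>. f \<omega> \<partial>stream_space (return_pmf x)) \<in> {0, f (sconst x)}"
proof (cases "integrable (stream_space (return_pmf x)) f")
  case True
  then have "(\<integral>\<omega>. f \<omega> \<partial>stream_space (return_pmf x)) = (\<integral>\<omega>. f (sconst x) \<partial>stream_space (return_pmf x))"
    using AE_stream_space_return_pmf[of x] by (intro integral_cong_AE) auto
  then show ?thesis
    by (simp add: prob_space.prob_space[OF prob_space.prob_space_stream_space[OF prob_space_measure_pmf]])
qed (simp add: not_integrable_integral_eq)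

lemma induced_ord_cong:
  assumes "\<And>\<pi>. \<pi> \<in> policies E \<Longrightarrow> J \<pi> = J' \<pi>"
  shows "induced_ord E J = induced_ord E J'"
  using assms by (auto simp: induced_ord_def)

lemma preorder_on_induced_ord: "preorder_on (policies E) (induced_ord E J)"
  by (auto simp: preorder_on_def refl_on_def trans_def induced_ord_def)

lemma total_on_induced_ord: "total_on (policies E) (induced_ord E J)"
  by (auto simp: total_on_def induced_ord_def)

lemma induced_ord_eq_imp_less:
  assumes "induced_ord E J = induced_ord E J'" "\<pi> \<in> policies E" "\<pi>' \<in> policies E"
    and "J \<pi> < J \<pi>'"
  shows "J' \<pi> < J' \<pi>'"
proof -
  have "(\<pi>, \<pi>') \<notin> induced_ord E J"
    using assms(4) by (auto simp: induced_ord_def)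
  then show ?thesis
    using assms(1-3) by (auto simp: induced_ord_def)
qed

definition single_state_env :: "nat set \<Rightarrow> env" where
  "single_state_env A = \<lparr>St = {0}, Ac = A, Tr = (\<lambda>_ _. return_pmf 0), In = return_pmf 0\<rparr>"

definition step_pmf :: "(nat \<Rightarrow> nat pmf) \<Rightarrow> (nat \<times> nat) pmf" where
  "step_pmf \<pi> = map_pmf (Pair 0) (\<pi> 0)"

definition det_policy :: "nat \<Rightarrow> nat \<Rightarrow> nat pmf" where
  "det_policy a = (\<lambda>s. if s = 0 then return_pmf a else return_pmf undefined)"

definition action_reward :: "(nat \<Rightarrow> real) \<Rightarrow> nat \<times> nat \<times> nat \<Rightarrow> real" where
  "action_reward r x = r (fst (snd x))"

lemma wf_single_state_env: "finite A \<Longrightarrow> A \<noteq> {} \<Longrightarrow> wf_env (single_state_env A)"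
  by (auto simp: wf_env_def single_state_env_def)

lemma det_policy_in_policies: "a \<in> A \<Longrightarrow> det_policy a \<in> policies (single_state_env A)"
  by (auto simp: det_policy_def policies_def single_state_env_def)

lemma pmf_step_pmf: "pmf (step_pmf \<pi>) (s, a) = (if s = 0 then pmf (\<pi> 0) a else 0)"
proof -
  have "inj (Pair (0::nat))"
    by (auto intro: injI)
  from pmf_map_inj'[OF this, of "\<pi> 0" a] show ?thesis
    by (auto simp: step_pmf_def pmf_eq_0_set_pmf)
qed

lemma prefix_prob_single_state_env:
  "prefix_prob (single_state_env A) \<pi> xs = prod_list (map (pmf (step_pmf \<pi>)) xs)"
proof -
  have "cont_prob (single_state_env A) \<pi> s a xs = prod_list (map (pmf (step_pmf \<pi>)) xs)" for s a
    by (induction xs arbitrary: s a) (auto simp: pmf_step_pmf single_state_env_def)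
  then show ?thesis
    by (cases xs) (auto simp: pmf_step_pmf single_state_env_def)
qed

lemma traj_single_state_env:
  "traj (single_state_env A) \<pi> = stream_space (measure_pmf (step_pmf \<pi>))"
  unfolding traj_def
proof (rule the_equality)
  have "sets (stream_space (measure_pmf (step_pmf \<pi>))) = sets (stream_space (count_space UNIV))"
    by (rule sets_stream_space_cong) simp
  then show "prob_space (stream_space (measure_pmf (step_pmf \<pi>))) \<and>
      sets (stream_space (measure_pmf (step_pmf \<pi>))) = sets (stream_space (count_space UNIV)) \<and>
      (\<forall>xs. emeasure (stream_space (measure_pmf (step_pmf \<pi>))) (sstart UNIV xs) =
        ennreal (prefix_prob (single_state_env A) \<pi> xs))"
    by (simp add: prob_space.prob_space_stream_space prob_space_measure_pmf
        emeasure_stream_space_pmf_sstart prefix_prob_single_state_env)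
  then show "M = stream_space (measure_pmf (step_pmf \<pi>))"
    if "prob_space M \<and> sets M = sets (stream_space (count_space UNIV)) \<and>
      (\<forall>xs. emeasure M (sstart UNIV xs) = ennreal (prefix_prob (single_state_env A) \<pi> xs))" for M
    using that by (intro stream_space_eq_sstart[where S = UNIV]) auto
qed

lemma integral_action_reward_single_state_env:
  "(\<integral>\<omega>. action_reward r (trans_at \<omega> t) \<partial>traj (single_state_env A) \<pi>) = (\<integral>a. r a \<partial>\<pi> 0)"
proof -
  have "(\<integral>\<omega>. action_reward r (trans_at \<omega> t) \<partial>traj (single_state_env A) \<pi>)
      = (\<integral>\<omega>. r (snd (\<omega> !! t)) \<partial>stream_space (measure_pmf (step_pmf \<pi>)))"
    by (simp add: traj_single_state_env action_reward_def trans_at_def)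
  also have "\<dots> = (\<integral>x. r (snd x) \<partial>distr (stream_space (step_pmf \<pi>)) (step_pmf \<pi>) (\<lambda>\<omega>. \<omega> !! t))"
    by (simp add: integral_distr)
  also have "\<dots> = (\<integral>a. r a \<partial>\<pi> 0)"
    by (simp add: measure_pmf.distr_stream_space_snth step_pmf_def)
  finally show ?thesis .
qed

lemma J_MR_single_state_env:
  "J_MR (single_state_env A) (action_reward r) 0 \<pi> = (\<integral>a. r a \<partial>\<pi> 0)"
proof -
  have "(\<Sum>t. 0 ^ t * action_reward r (trans_at \<omega> t)) = action_reward r (trans_at \<omega> 0)" for \<omega>
  proof -
    have "(\<lambda>t. 0 ^ t * action_reward r (trans_at \<omega> t))
        = (\<lambda>t. if t = 0 then action_reward r (trans_at \<omega> t) else 0)"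
      by auto
    then show ?thesis
      using sums_single[of 0 "\<lambda>t. action_reward r (trans_at \<omega> t)"] by (metis sums_unique)
  qed
  then show ?thesis
    by (simp add: J_MR_def integral_action_reward_single_state_env)
qed

lemma J_LAR_single_state_env:
  assumes "integrable (measure_pmf (\<pi> 0)) r"
  shows "J_LAR (single_state_env A) (action_reward r) \<pi> = (\<integral>a. r a \<partial>\<pi> 0)"
proof -
  have "integrable (traj (single_state_env A) \<pi>) (\<lambda>\<omega>. action_reward r (trans_at \<omega> t))" for t
  proof -
    have "integrable (distr (stream_space (step_pmf \<pi>)) (step_pmf \<pi>) (\<lambda>\<omega>. \<omega> !! t)) (\<lambda>x. r (snd x))"
      using assms by (simp add: measure_pmf.distr_stream_space_snth step_pmf_def)
    then show ?thesis
      by (simp add: integrable_distr_eq traj_single_state_env action_reward_def trans_at_def)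
  qed
  then have "(\<integral>\<omega>. (\<Sum>t<N. action_reward r (trans_at \<omega> t)) \<partial>traj (single_state_env A) \<pi>)
      = real N * (\<integral>a. r a \<partial>\<pi> 0)" for N
    by (simp add: integral_action_reward_single_state_env)
  then have "(\<lambda>N. 1 / real N * (\<integral>\<omega>. (\<Sum>t<N. action_reward r (trans_at \<omega> t)) \<partial>traj (single_state_env A) \<pi>))
      \<longlonglongrightarrow> (\<integral>a. r a \<partial>\<pi> 0)"
    by (intro tendsto_eventually) (auto simp: eventually_sequentially intro!: exI[of _ 1])
  then show ?thesis
    unfolding J_LAR_def by (rule limI)
qed

lemma J_LTL_det_policy: "J_LTL (single_state_env A) \<phi> (det_policy a) \<in> {0, 1}"
proof -
  have "step_pmf (det_policy a) = return_pmf (0, a)"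
    by (simp add: step_pmf_def det_policy_def)
  then show ?thesis
    using integral_stream_space_return_pmf[where f = "\<lambda>\<omega>. if ltl_holds \<phi> \<omega> 0 then 1 else 0" and x = "(0, a)"]
    by (auto simp: J_LTL_def traj_single_state_env split: if_splits)
qed

lemma integrable_single_state_policy:
  fixes r :: "nat \<Rightarrow> real"
  assumes "finite A" "\<pi> \<in> policies (single_state_env A)"
  shows "integrable (measure_pmf (\<pi> 0)) r"
proof (rule integrable_measure_pmf_finite)
  show "finite (set_pmf (\<pi> 0))"
    using assms by (auto simp: policies_def single_state_env_def intro: finite_subset)
qed

lemma integral_det_policy: "(\<integral>x. r x \<partial>det_policy a 0) = (r a :: real)"
  by (simp add: det_policy_def return_pmf.rep_eq integral_return)

lemma expected_reward_ord_in_Ord_MR_Ord_LAR: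
  fixes r :: "nat \<Rightarrow> real"
  assumes "finite A"
  defines "J \<equiv> \<lambda>\<pi>. \<integral>a. r a \<partial>\<pi> 0"
  shows "induced_ord (single_state_env A) J \<in> Ord_MR (single_state_env A) \<inter> Ord_LAR (single_state_env A)"
proof
  have "induced_ord (single_state_env A) J
      = induced_ord (single_state_env A) (J_MR (single_state_env A) (action_reward r) 0)"
    by (intro induced_ord_cong) (simp add: J_def J_MR_single_state_env)
  then show "induced_ord (single_state_env A) J \<in> Ord_MR (single_state_env A)"
    unfolding Ord_MR_def by (intro CollectI exI[of _ "action_reward r"] exI[of _ 0]) simp
  have "induced_ord (single_state_env A) J
      = induced_ord (single_state_env A) (J_LAR (single_state_env A) (action_reward r))"
    using assms(1) unfolding J_def
    by (intro induced_ord_cong J_LAR_single_state_env[symmetric] integrable_single_state_policy)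
  then show "induced_ord (single_state_env A) J \<in> Ord_LAR (single_state_env A)"
    unfolding Ord_LAR_def by auto
qed

lemma three_level_ord_notin_Ord_LTL:
  assumes "{a, b, c} \<subseteq> A"
    and "J (det_policy a) < J (det_policy b)" "J (det_policy b) < J (det_policy c)"
  shows "induced_ord (single_state_env A) J \<notin> Ord_LTL (single_state_env A)"
proof
  assume "induced_ord (single_state_env A) J \<in> Ord_LTL (single_state_env A)"
  then obtain \<phi> where eq: "induced_ord (single_state_env A) J
      = induced_ord (single_state_env A) (J_LTL (single_state_env A) \<phi>)"
    by (auto simp: Ord_LTL_def)
  have "J_LTL (single_state_env A) \<phi> (det_policy a) < J_LTL (single_state_env A) \<phi> (det_policy b)"
    "J_LTL (single_state_env A) \<phi> (det_policy b) < J_LTL (single_state_env A) \<phi> (det_policy c)"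
    using assms by (auto intro!: induced_ord_eq_imp_less[OF eq] det_policy_in_policies)
  then show False
    using J_LTL_det_policy[of A \<phi> a] J_LTL_det_policy[of A \<phi> b] J_LTL_det_policy[of A \<phi> c]
    by auto
qed

theorem mainTheorem10:
  shows "\<exists>E r. wf_env E \<and> preorder_on (policies E) r \<and> total_on (policies E) r \<and>
           r \<in> Ord_MR E \<inter> Ord_LAR E \<and> r \<notin> Ord_LTL E"
proof (intro exI conjI)
  let ?E = "single_state_env {0, 1, 2}"
  let ?J = "\<lambda>\<pi>. \<integral>a. real a \<partial>\<pi> 0"
  show "wf_env ?E"
    by (simp add: wf_single_state_env)
  show "preorder_on (policies ?E) (induced_ord ?E ?J)" "total_on (policies ?E) (induced_ord ?E ?J)"
    by (rule preorder_on_induced_ord total_on_induced_ord)+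
  show "induced_ord ?E ?J \<in> Ord_MR ?E \<inter> Ord_LAR ?E"
    by (rule expected_reward_ord_in_Ord_MR_Ord_LAR) simp
  show "induced_ord ?E ?J \<notin> Ord_LTL ?E"
    by (rule three_level_ord_notin_Ord_LTL[of 0 1 2]) (simp_all add: integral_det_policy)
qed

end
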